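(* Let $d, s, t, \ell$ be integers with $s\ge 1$, $\ell \ge 0$, $d \geq t-1$ and $t \geq \max\{5, \ell+4\}$. Then for every $\theta_{t,\ell}\in\Theta_{t,\ell}$, \[ \mathrm{rb}(W_d, \theta_{t,\ell}) \ge \left\lfloor \frac{2t-7}{t-3}\, d \right\rfloor + 1, \] and furthermore, if ($s = 2$ and $t \geq 6$) or ($s \geq 3$ and $t \geq 7$), then \[ \mathrm{rb}(W_d(s), F_t) \ge \left\lfloor \frac{(s+1)t-(3s+4)}{t-3}\, d \right\rfloor + 1 . \]
   Context: A subgraph of an edge-colored graph is rainbow if no two of its edges have the same color. For graphs $G$ and $H$, the rainbow number $\mathrm{rb}(G,H)$ is the minimum integer $k$ such that every edge-coloring of $G$ that uses at least $k$ distinct colors contains a rainbow subgraph isomorphic to $H$. For $d \ge 3$ and $s \ge 1$, $W_d(s) = \overline{K_s} + C_d$: hub vertices $u_1,\dots,u_s$, pairwise non-adjacent, each adjacent to every vertex of a cycle $v_1v_2\cdots v_dv_1$; $W_d := W_d(1)$. The fan $F_t$ is obtained from a cycle $v_1v_2\cdots v_tv_1$ by adding all chords $v_1v_i$, $3 \le i \le t-1$. For $0 \le \ell \le t-3$, $\Theta_{t,\ell}$ is the class of graphs obtained from a cycle $v_1v_2\cdots v_tv_1$ by adding exactly $\ell$ chords, each from $\{v_1v_i : 3 \le i \le t-1\}$. *)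

theory Defs
  imports Complex_Main
begin

text \<open>A (simple) graph is a pair (vertex set, edge set); every edge is a 2-element
  subset of the vertex set.\<close>
type_synonym 'a graph = "'a set \<times> 'a set set"

definition has_rainbow_copy :: "('b set \<Rightarrow> nat) \<Rightarrow> 'b graph \<Rightarrow> 'a graph \<Rightarrow> bool" where
  "has_rainbow_copy c G H \<longleftrightarrow>
     (\<exists>f. inj_on f (fst H) \<and> f ` fst H \<subseteq> fst G \<and>
          (\<forall>e\<in>snd H. f ` e \<in> snd G) \<and>
          inj_on (\<lambda>e. c (f ` e)) (snd H))"

definition rb :: "'b graph \<Rightarrow> 'a graph \<Rightarrow> nat" where
  "rb G H = (LEAST k. \<forall>c :: 'b set \<Rightarrow> nat.
       card (c ` snd G) \<ge> k \<longrightarrow> has_rainbow_copy c G H)"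

text \<open>Generalized wheel W_d(s): hubs Inl i (i < s), cycle vertices Inr j (j < d),
  cycle v_1 ... v_d being Inr 0, ..., Inr (d-1).\<close>
definition gen_wheel :: "nat \<Rightarrow> nat \<Rightarrow> (nat + nat) graph" where
  "gen_wheel d s =
     (Inl ` {..<s} \<union> Inr ` {..<d},
      {{Inl i, Inr j} | i j. i < s \<and> j < d} \<union>
      {{Inr j, Inr ((j + 1) mod d)} | j. j < d})"

definition wheel :: "nat \<Rightarrow> (nat + nat) graph" where
  "wheel d = gen_wheel d 1"

text \<open>Cycle v_1 ... v_t with vertex v_i represented by i - 1 (so v_1 = 0).\<close>
definition cycle_edges :: "nat \<Rightarrow> nat set set" where
  "cycle_edges t = {{i, (i + 1) mod t} | i. i < t}"

text \<open>Admissible chords v_1 v_i, 3 \<le> i \<le> t-1, i.e. {0, j} with 2 \<le> j \<le> t-2.\<close>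
definition fan_chords :: "nat \<Rightarrow> nat set set" where
  "fan_chords t = {{0, j} | j. 2 \<le> j \<and> j \<le> t - 2}"

definition fan :: "nat \<Rightarrow> nat graph" where
  "fan t = ({..<t}, cycle_edges t \<union> fan_chords t)"

definition Theta :: "nat \<Rightarrow> nat \<Rightarrow> nat graph set" where
  "Theta t l = {({..<t}, cycle_edges t \<union> C) | C. C \<subseteq> fan_chords t \<and> card C = l}"

end

theory Submission
  imports Defs
begin

(* Put m = t - 3 and R = d - 1 - \<lfloor>(d - 1)/m\<rfloor>. Colour the rim edge v_j v_{j+1} (indices mod d,
   counted from 0) by (j - \<lfloor>j/m\<rfloor>) mod R, and give every spoke a new colour of its own;
   this uses R + s d colours, and R + s d \<ge> \<lfloor>((s+1)t - (3s+4)) d/(t-3)\<rfloor>. The rim colour does not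
   change from edge j to edge j + 1 when j = m - 1 (mod m), nor from edge d - 1 back to edge 0,
   so every m + 1 consecutive rim edges contain two adjacent edges of equal colour. Since a rim path
   with distinct vertices runs around the rim in one direction, no rainbow t-cycle has all but one
   of its vertices on the rim. In W_d there is a single hub, so no member of \<Theta>_{t,l} has a rainbow
   copy. A rainbow fan F_t in W_d(s) cannot have its centre at a hub either, as its other t - 1
   vertices would then all lie on the rim; and if the centre is a rim vertex v, those t - 1
   vertices lie among the s pairwise non-adjacent hubs and the two rim neighbours of v, which is
   impossible for s = 2, t \<ge> 6 (five vertices, four places) and for s \<ge> 3, t \<ge> 7 (each of the
   adjacent pairs v_2 v_3, v_4 v_5, v_6 v_7 needs a rim neighbour of v). *)

lemma Suc_mod_inj:
  fixes x y d :: nat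
  assumes "x < d" "y < d" "Suc x mod d = Suc y mod d"
  shows "x = y"
  using assms by (cases "Suc x = d"; cases "Suc y = d") auto

lemma inj_on_add_mod: "inj_on (\<lambda>i. (p + i) mod t) {..<(t::nat)}"
proof (rule inj_onI)
  fix i j assume "i \<in> {..<t}" "j \<in> {..<t}" and eq: "(p + i) mod t = (p + j) mod t"
  from eq have "i mod t = j mod t"
    by (simp add: nat_mod_eq_iff)
  with \<open>i \<in> {..<t}\<close> \<open>j \<in> {..<t}\<close> show "i = j"
    by simp
qed

lemma rb_gt_if_no_rainbow_copy:
  fixes c :: "'b set \<Rightarrow> nat" and G :: "'b graph" and H :: "'a graph"
  assumes "finite (snd G)" and "k \<le> card (c ` snd G)" and "\<not> has_rainbow_copy c G H"
  shows "k < rb G H"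
proof (rule ccontr)
  let ?forces = "\<lambda>k. \<forall>c :: 'b set \<Rightarrow> nat. k \<le> card (c ` snd G) \<longrightarrow> has_rainbow_copy c G H"
  have "?forces (Suc (card (snd G)))"
    using card_image_le[OF assms(1)] by (metis not_less_eq_eq)
  then have "?forces (rb G H)"
    unfolding rb_def by (rule LeastI)
  moreover assume "\<not> k < rb G H"
  ultimately show False
    using assms(2,3) by auto
qed

lemma gen_wheel_edge_hub_hub: "{Inl i, Inl j} \<notin> snd (gen_wheel d s)"
  unfolding gen_wheel_def by (auto simp: doubleton_eq_iff)

lemma gen_wheel_edge_hub_rim: "{Inl i, Inr j} \<in> snd (gen_wheel d s) \<longleftrightarrow> i < s \<and> j < d"
  unfolding gen_wheel_def by (auto simp: doubleton_eq_iff)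

lemma gen_wheel_edge_rim_rim:
  "{Inr a, Inr b} \<in> snd (gen_wheel d s) \<longleftrightarrow>
     a < d \<and> b < d \<and> (Suc a mod d = b \<or> Suc b mod d = a)"
  unfolding gen_wheel_def by (auto simp: doubleton_eq_iff)

lemma finite_gen_wheel_edges: "finite (snd (gen_wheel d s))"
proof -
  have "snd (gen_wheel d s) =
      (\<lambda>(i, j). {Inl i, Inr j}) ` ({..<s} \<times> {..<d}) \<union> (\<lambda>j. {Inr j, Inr ((j + 1) mod d)}) ` {..<d}"
    unfolding gen_wheel_def by auto
  then show ?thesis
    by simp
qed

definition rim_neighbours :: "nat \<Rightarrow> nat \<Rightarrow> nat set" where
  "rim_neighbours d v = {w. w < d \<and> (Suc v mod d = w \<or> Suc w mod d = v)}"

lemma card_rim_neighbours_le: "card (rim_neighbours d v) \<le> 2"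
proof -
  have "rim_neighbours d v \<subseteq> {Suc v mod d, (v + (d - 1)) mod d}"
  proof
    fix w assume "w \<in> rim_neighbours d v"
    then have "w < d" "Suc v mod d = w \<or> Suc w mod d = v"
      unfolding rim_neighbours_def by auto
    then show "w \<in> {Suc v mod d, (v + (d - 1)) mod d}"
      by (cases "Suc w = d") auto
  qed
  then have "card (rim_neighbours d v) \<le> card {Suc v mod d, (v + (d - 1)) mod d}"
    by (rule card_mono[rotated]) simp
  also have "\<dots> \<le> 2"
    by (simp add: card_insert_if)
  finally show ?thesis .
qed

lemma gen_wheel_neighbour_of_rim:
  assumes "{Inr v, y} \<in> snd (gen_wheel d s)"
  shows "y \<in> Inl ` {..<s} \<union> Inr ` rim_neighbours d v"
  using assms gen_wheel_edge_hub_rim[of _ v] gen_wheel_edge_rim_rim[of v]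
  by (cases y) (auto simp: rim_neighbours_def insert_commute)

definition rim_colours :: "nat \<Rightarrow> nat \<Rightarrow> nat" where
  "rim_colours d m = d - 1 - (d - 1) div m"

definition rim_colour :: "nat \<Rightarrow> nat \<Rightarrow> nat \<Rightarrow> nat" where
  "rim_colour d m j = (j - j div m) mod rim_colours d m"

definition rim_arc :: "nat \<Rightarrow> nat \<Rightarrow> (nat + nat) set" where
  "rim_arc d j = {Inr j, Inr (Suc j mod d)}"

definition wheel_colouring :: "nat \<Rightarrow> nat \<Rightarrow> (nat + nat) set \<Rightarrow> nat" where
  "wheel_colouring d m e =
     (if \<exists>j<d. e = rim_arc d j then rim_colour d m (THE j. j < d \<and> e = rim_arc d j)
      else rim_colours d m + (THE i. Inl i \<in> e) * d + (THE j. Inr j \<in> e))"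

lemma rim_arc_inj:
  assumes "3 \<le> d" "j < d" "j' < d" "rim_arc d j = rim_arc d j'"
  shows "j = j'"
proof (rule ccontr)
  assume "j \<noteq> j'"
  with assms have "Suc j mod d = j'" "Suc j' mod d = j"
    unfolding rim_arc_def by (auto simp: doubleton_eq_iff)
  with assms show False
    by (cases "Suc j = d"; cases "Suc j' = d") auto
qed

lemma wheel_colouring_rim_arc:
  assumes "3 \<le> d" "j < d"
  shows "wheel_colouring d m (rim_arc d j) = rim_colour d m j"
proof -
  have "(THE j'. j' < d \<and> rim_arc d j = rim_arc d j') = j"
    using assms rim_arc_inj by (intro the_equality) auto
  with assms show ?thesis
    unfolding wheel_colouring_def by auto
qed

lemma wheel_colouring_spoke:
  "wheel_colouring d m {Inl i, Inr j} = rim_colours d m + i * d + j"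
proof -
  have "\<not> (\<exists>j'<d. {Inl i, Inr j} = rim_arc d j')"
    unfolding rim_arc_def by auto
  moreover have "(THE i'. Inl i' \<in> {Inl i, Inr j :: nat + nat}) = i"
    by auto
  moreover have "(THE j'. Inr j' \<in> {Inl i, Inr j :: nat + nat}) = j"
    by auto
  ultimately show ?thesis
    unfolding wheel_colouring_def by (simp only: if_False)
qed

lemma rim_colour_repeats:
  assumes "2 \<le> m" "m + 2 \<le> d" "a < d"
  shows "\<exists>i<m. rim_colour d m ((a + i) mod d) = rim_colour d m ((a + Suc i) mod d)"
proof (cases "a + m < d")
  case True
  define i where "i = m - 1 - a mod m"
  have "i < m"
    using assms(1) unfolding i_def by simp
  have "a + i = a div m * m + (m - 1)"
    using assms(1) div_mult_mod_eq[of a m] mod_less_divisor[of m a] unfolding i_def by linarith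
  then have "(a + i) div m = a div m"
    using assms(1) by (simp only:) (subst div_mult_self3; simp)
  moreover have "Suc (a + i) = Suc (a div m) * m"
    using \<open>a + i = a div m * m + (m - 1)\<close> assms(1) by simp
  ultimately have "Suc (a + i) div m = Suc ((a + i) div m)"
    using assms(1) by simp
  then have "rim_colour d m (a + i) = rim_colour d m (Suc (a + i))"
    unfolding rim_colour_def using div_le_dividend[of "a + i" m] by simp
  then show ?thesis
    using True \<open>i < m\<close> by (intro exI[of _ i]) auto
next
  case False
  define i where "i = d - 1 - a"
  have "i < m" "(a + i) mod d = d - 1" "(a + Suc i) mod d = 0"
    using assms False unfolding i_def by auto
  moreover have "rim_colour d m (d - 1) = rim_colour d m 0"
    unfolding rim_colour_def rim_colours_def by simp
  ultimately show ?thesis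
    by metis
qed

lemma rim_colour_surj:
  assumes "v < rim_colours d m"
  shows "\<exists>j<d. rim_colour d m j = v"
proof -
  have "\<bar>int (Suc j - Suc j div m) - int (j - j div m)\<bar> \<le> 1" for j
  proof -
    have "j div m \<le> Suc j div m"
      by (rule div_le_mono) simp
    moreover have "Suc j div m \<le> Suc (j div m)"
      by (simp add: div_Suc)
    moreover have "j div m \<le> j"
      by (rule div_le_dividend)
    ultimately show ?thesis
      by linarith
  qed
  then obtain j where "j \<le> d - 1" "int (j - j div m) = int v"
    using nat0_intermed_int_val[of "d - 1" "\<lambda>j. int (j - j div m)" "int v"] assms
    unfolding rim_colours_def by auto
  moreover have "0 < d"
    using assms unfolding rim_colours_def by simp
  ultimately have "j < d" "j - j div m = v"
    by simp_all
  then show ?thesis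
    using assms unfolding rim_colour_def by auto
qed

lemma card_wheel_colouring_ge:
  assumes "3 \<le> d"
  shows "rim_colours d m + s * d \<le> card (wheel_colouring d m ` snd (gen_wheel d s))"
proof -
  have "{..< rim_colours d m + s * d} \<subseteq> wheel_colouring d m ` snd (gen_wheel d s)"
  proof
    fix v assume v: "v \<in> {..< rim_colours d m + s * d}"
    show "v \<in> wheel_colouring d m ` snd (gen_wheel d s)"
    proof (cases "v < rim_colours d m")
      case True
      then obtain j where "j < d" "rim_colour d m j = v"
        using rim_colour_surj by blast
      moreover have "rim_arc d j \<in> snd (gen_wheel d s)"
        using \<open>j < d\<close> unfolding gen_wheel_def rim_arc_def by auto
      ultimately show ?thesis
        using wheel_colouring_rim_arc[OF assms] by (metis image_eqI)
    next
      case False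
      define k where "k = v - rim_colours d m"
      have "k < s * d"
        using v False unfolding k_def by auto
      then have "k div d < s" "k mod d < d"
        using assms by (auto simp: div_less_iff_less_mult mult.commute)
      then have "{Inl (k div d), Inr (k mod d)} \<in> snd (gen_wheel d s)"
        by (simp add: gen_wheel_edge_hub_rim)
      moreover have "wheel_colouring d m {Inl (k div d), Inr (k mod d)} = v"
        unfolding wheel_colouring_spoke k_def using False by simp
      ultimately show ?thesis
        by (metis image_eqI)
    qed
  qed
  then show ?thesis
    using card_mono[OF finite_imageI[OF finite_gen_wheel_edges]] by fastforce
qed

lemma cycle_walk_direction:
  fixes g :: "nat \<Rightarrow> nat"
  assumes "\<forall>i\<le>n. g i < d"
    and "\<forall>i<n. Suc (g i) mod d = g (Suc i) \<or> Suc (g (Suc i)) mod d = g i"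
    and "\<forall>i. Suc (Suc i) \<le> n \<longrightarrow> g (Suc (Suc i)) \<noteq> g i"
  shows "(\<forall>i<n. Suc (g i) mod d = g (Suc i)) \<or> (\<forall>i<n. Suc (g (Suc i)) mod d = g i)"
proof -
  let ?forward = "\<lambda>i. Suc (g i) mod d = g (Suc i)"
  have step: "?forward (Suc i) \<longleftrightarrow> ?forward i" if "Suc i < n" for i
  proof -
    have "g i < d" "g (Suc (Suc i)) < d" "g (Suc (Suc i)) \<noteq> g i"
      using assms(1,3) that by auto
    moreover have "?forward i \<or> Suc (g (Suc i)) mod d = g i"
      "?forward (Suc i) \<or> Suc (g (Suc (Suc i))) mod d = g (Suc i)"
      using assms(2) that by auto
    ultimately show ?thesis
      using Suc_mod_inj[of "g (Suc (Suc i))" d "g i"] by auto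
  qed
  have "?forward i \<longleftrightarrow> ?forward 0" if "i < n" for i
    using that by (induction i) (auto simp: step)
  then show ?thesis
    using assms(2) by blast
qed

lemma forward_rim_walk_repeats_colour:
  assumes "2 \<le> m" "m + 2 \<le> d" "g 0 < d" "\<forall>i\<le>m. Suc (g i) mod d = g (Suc i)"
  shows "\<exists>i<m. wheel_colouring d m {Inr (g i), Inr (g (Suc i))} =
                wheel_colouring d m {Inr (g (Suc i)), Inr (g (Suc (Suc i)))}"
proof -
  have position: "g i = (g 0 + i) mod d" if "i \<le> Suc m" for i
    using that
  proof (induction i)
    case (Suc i)
    have "g (Suc i) = Suc (g i) mod d"
      using assms(4) Suc.prems by simp
    then show ?case
      using Suc by (simp add: mod_Suc_eq)
  qed (use assms(3) in simp)
  have colour: "wheel_colouring d m {Inr (g i), Inr (g (Suc i))} = rim_colour d m ((g 0 + i) mod d)"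
    if "i \<le> m" for i
  proof -
    have "{Inr (g i), Inr (g (Suc i))} = rim_arc d ((g 0 + i) mod d)"
      using position[of i] position[of "Suc i"] that unfolding rim_arc_def by (simp add: mod_Suc_eq)
    then show ?thesis
      using wheel_colouring_rim_arc[of d "(g 0 + i) mod d"] assms(1,2) by simp
  qed
  obtain i where "i < m" "rim_colour d m ((g 0 + i) mod d) = rim_colour d m ((g 0 + Suc i) mod d)"
    using rim_colour_repeats assms(1-3) by blast
  then show ?thesis
    using colour[of i] colour[of "Suc i"] by auto
qed

lemma backward_rim_walk_repeats_colour:
  assumes "2 \<le> m" "m + 2 \<le> d" "g (Suc m) < d" "\<forall>i\<le>m. Suc (g (Suc i)) mod d = g i"
  shows "\<exists>i<m. wheel_colouring d m {Inr (g i), Inr (g (Suc i))} =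
                wheel_colouring d m {Inr (g (Suc i)), Inr (g (Suc (Suc i)))}"
proof -
  define h where "h i = g (Suc m - i)" for i
  have "\<forall>i\<le>m. Suc (h i) mod d = h (Suc i)"
  proof (intro allI impI)
    fix i assume "i \<le> m"
    then have "m - i \<le> m" "Suc m - i = Suc (m - i)" "Suc m - Suc i = m - i"
      by auto
    then show "Suc (h i) mod d = h (Suc i)"
      using assms(4) unfolding h_def by simp
  qed
  moreover have "h 0 < d"
    using assms(3) unfolding h_def by simp
  ultimately obtain i where "i < m"
      "wheel_colouring d m {Inr (h i), Inr (h (Suc i))} =
       wheel_colouring d m {Inr (h (Suc i)), Inr (h (Suc (Suc i)))}"
    using forward_rim_walk_repeats_colour[OF assms(1,2)] by blast
  moreover define k where "k = m - Suc i"
  moreover have "h i = g (Suc (Suc k))" "h (Suc i) = g (Suc k)" "h (Suc (Suc i)) = g k"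
    using \<open>i < m\<close> unfolding h_def k_def by (simp_all add: Suc_diff_Suc Suc_diff_le)
  ultimately have "k < m" "wheel_colouring d m {Inr (g k), Inr (g (Suc k))} =
      wheel_colouring d m {Inr (g (Suc k)), Inr (g (Suc (Suc k)))}"
    by (simp_all add: insert_commute)
  then show ?thesis
    by blast
qed

lemma rim_walk_repeats_colour:
  assumes "2 \<le> m" "m + 2 \<le> d" "inj_on g {..Suc m}"
    and walk: "\<forall>i\<le>m. {Inr (g i), Inr (g (Suc i))} \<in> snd (gen_wheel d s)"
  shows "\<exists>i<m. wheel_colouring d m {Inr (g i), Inr (g (Suc i))} =
                wheel_colouring d m {Inr (g (Suc i)), Inr (g (Suc (Suc i)))}"
proof -
  have "g i < d \<and> g (Suc i) < d" if "i \<le> m" for i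
    using walk that by (simp add: gen_wheel_edge_rim_rim)
  then have on_rim: "\<forall>i\<le>Suc m. g i < d"
    by (metis le_SucE le_refl)
  moreover have "\<forall>i<Suc m. Suc (g i) mod d = g (Suc i) \<or> Suc (g (Suc i)) mod d = g i"
    using walk by (simp add: gen_wheel_edge_rim_rim less_Suc_eq_le)
  moreover have "\<forall>i. Suc (Suc i) \<le> Suc m \<longrightarrow> g (Suc (Suc i)) \<noteq> g i"
    using assms(3) by (auto dest: inj_onD)
  ultimately have
    "(\<forall>i<Suc m. Suc (g i) mod d = g (Suc i)) \<or> (\<forall>i<Suc m. Suc (g (Suc i)) mod d = g i)"
    by (rule cycle_walk_direction)
  then show ?thesis
  proof (elim disjE)
    assume "\<forall>i<Suc m. Suc (g i) mod d = g (Suc i)"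
    then show ?thesis
      using on_rim by (intro forward_rim_walk_repeats_colour[OF assms(1,2)]) auto
  next
    assume "\<forall>i<Suc m. Suc (g (Suc i)) mod d = g i"
    then show ?thesis
      using on_rim by (intro backward_rim_walk_repeats_colour[OF assms(1,2)]) auto
  qed
qed

lemma cycle_edge_Suc_mod: "x < t \<Longrightarrow> {x, Suc x mod t} \<in> cycle_edges t"
  unfolding cycle_edges_def by auto

lemma rainbow_copy_has_no_long_rim_path:
  assumes m: "2 \<le> m" "m + 2 \<le> d"
    and edges: "\<forall>e\<in>E. f ` e \<in> snd (gen_wheel d s)"
    and rainbow: "inj_on (\<lambda>e. wheel_colouring d m (f ` e)) E"
    and path: "\<forall>i\<le>m. {q i, q (Suc i)} \<in> E"
    and "inj_on (f \<circ> q) {..Suc m}"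
    and rim: "\<forall>i\<le>Suc m. f (q i) \<in> range Inr"
  shows False
proof -
  define g where "g i = projr (f (q i))" for i
  have f_q: "f (q i) = Inr (g i)" if "i \<le> Suc m" for i
    using rim that unfolding g_def by auto
  have image_edge: "f ` {q i, q (Suc i)} = {Inr (g i), Inr (g (Suc i))}" if "i \<le> m" for i
    using f_q[of i] f_q[of "Suc i"] that by simp
  have "inj_on g {..Suc m}"
    using \<open>inj_on (f \<circ> q) {..Suc m}\<close> f_q unfolding inj_on_def by simp
  moreover have "\<forall>i\<le>m. {Inr (g i), Inr (g (Suc i))} \<in> snd (gen_wheel d s)"
    using edges path image_edge by (metis (no_types, lifting))
  ultimately obtain i where "i < m"
      "wheel_colouring d m {Inr (g i), Inr (g (Suc i))} =
       wheel_colouring d m {Inr (g (Suc i)), Inr (g (Suc (Suc i)))}"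
    using rim_walk_repeats_colour[OF m] by blast
  then have "wheel_colouring d m (f ` {q i, q (Suc i)}) =
      wheel_colouring d m (f ` {q (Suc i), q (Suc (Suc i))})"
    using image_edge[of i] image_edge[of "Suc i"] by simp
  moreover have "q j \<noteq> q k" if "j \<le> Suc m" "k \<le> Suc m" "j \<noteq> k" for j k
    using inj_onD[OF \<open>inj_on (f \<circ> q) {..Suc m}\<close>, of j k] that by auto
  then have "{q i, q (Suc i)} \<noteq> {q (Suc i), q (Suc (Suc i))}"
    using \<open>i < m\<close> by (auto simp: doubleton_eq_iff)
  ultimately show False
    using inj_onD[OF rainbow] path \<open>i < m\<close> by (metis Suc_leI less_imp_le_nat)
qed

lemma rainbow_cycle_leaves_rim_twice:
  assumes "5 \<le> t" "t \<le> d + 1" "inj_on f {..<t}"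
    and edges: "\<forall>e\<in>cycle_edges t. f ` e \<in> snd (gen_wheel d s)"
    and rainbow: "inj_on (\<lambda>e. wheel_colouring d (t - 3) (f ` e)) (cycle_edges t)"
    and "p < t"
  shows "\<exists>x<t. x \<noteq> p \<and> f x \<notin> range Inr"
proof (rule ccontr)
  assume off_rim: "\<not> ?thesis"
  define m where "m = t - 3"
  define q where "q i = (p + Suc i) mod t" for i
  have m: "2 \<le> m" "m + 2 \<le> d"
    using assms(1,2) unfolding m_def by auto
  have q_eq_iff: "q i = q j \<longleftrightarrow> i = j" if "i \<le> Suc m" "j \<le> Suc m" for i j
    using inj_on_eq_iff[OF inj_on_add_mod, of "Suc i" t "Suc j" p] that assms(1)
    unfolding q_def m_def by simp
  have q_lt: "q i < t" for i
    using assms(1) unfolding q_def by simp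
  have "q i \<noteq> p" if "i \<le> Suc m" for i
    using inj_on_eq_iff[OF inj_on_add_mod, of "Suc i" t 0 p] that assms(1,6)
    unfolding q_def m_def by simp
  then have "\<forall>i\<le>Suc m. f (q i) \<in> range Inr"
    using off_rim q_lt by blast
  moreover have "inj_on (f \<circ> q) {..Suc m}"
    using q_eq_iff q_lt inj_on_eq_iff[OF assms(3)] unfolding inj_on_def by simp
  moreover have "{q i, q (Suc i)} \<in> cycle_edges t" for i
    using cycle_edge_Suc_mod[OF q_lt[of i]] unfolding q_def by (simp add: mod_Suc_eq)
  ultimately show False
    using rainbow_copy_has_no_long_rim_path[OF m edges] rainbow unfolding m_def by blast
qed

lemma wheel_no_rainbow_cycle_supergraph:
  assumes "5 \<le> t" "t \<le> d + 1" "cycle_edges t \<subseteq> E"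
  shows "\<not> has_rainbow_copy (wheel_colouring d (t - 3)) (wheel d) ({..<t}, E)"
proof
  assume "has_rainbow_copy (wheel_colouring d (t - 3)) (wheel d) ({..<t}, E)"
  then obtain f where f: "inj_on f {..<t}" "f ` {..<t} \<subseteq> fst (wheel d)"
      "\<forall>e\<in>E. f ` e \<in> snd (wheel d)" "inj_on (\<lambda>e. wheel_colouring d (t - 3) (f ` e)) E"
    unfolding has_rainbow_copy_def by auto
  have cycle: "\<forall>e\<in>cycle_edges t. f ` e \<in> snd (gen_wheel d 1)"
    "inj_on (\<lambda>e. wheel_colouring d (t - 3) (f ` e)) (cycle_edges t)"
    using f(3,4) assms(3) inj_on_subset unfolding wheel_def by auto
  have hub: "f x = Inl 0" if "x < t" "f x \<notin> range Inr" for x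
    using f(2) that unfolding wheel_def gen_wheel_def by auto
  obtain x where x: "x < t" "x \<noteq> 0" "f x \<notin> range Inr"
    using rainbow_cycle_leaves_rim_twice[OF assms(1,2) f(1) cycle, of 0] assms(1) by auto
  obtain y where y: "y < t" "y \<noteq> x" "f y \<notin> range Inr"
    using rainbow_cycle_leaves_rim_twice[OF assms(1,2) f(1) cycle x(1)] by auto
  have "f y = f x"
    using hub[OF x(1) x(3)] hub[OF y(1) y(3)] by simp
  with x y show False
    using inj_on_eq_iff[OF f(1)] by simp
qed

lemma fan_spoke:
  assumes "0 < x" "x < t"
  shows "{0, x} \<in> snd (fan t)"
proof -
  consider "x = 1" | "x = t - 1" | "2 \<le> x \<and> x \<le> t - 2"
    using assms by linarith
  then show ?thesis
  proof cases
    case 1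
    then show ?thesis
      using cycle_edge_Suc_mod[of 0 t] assms unfolding fan_def by simp
  next
    case 2
    then show ?thesis
      using cycle_edge_Suc_mod[of "t - 1" t] assms unfolding fan_def by (simp add: insert_commute)
  next
    case 3
    then show ?thesis
      unfolding fan_def fan_chords_def by auto
  qed
qed

lemma fan_copy_neighbour_of_rim_centre:
  assumes "\<forall>e\<in>snd (fan t). f ` e \<in> snd (gen_wheel d s)" "f 0 = Inr v" "0 < x" "x < t"
  shows "f x \<in> Inl ` {..<s} \<union> Inr ` rim_neighbours d v"
  using assms(1) fan_spoke[OF assms(3,4)] assms(2) gen_wheel_neighbour_of_rim[of v "f x" d s]
  by force

lemma fan_copy_path_edge_meets_rim_neighbours:
  assumes "\<forall>e\<in>snd (fan t). f ` e \<in> snd (gen_wheel d s)" "f 0 = Inr v" "0 < x" "Suc x < t"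
  shows "f x \<in> Inr ` rim_neighbours d v \<or> f (Suc x) \<in> Inr ` rim_neighbours d v"
proof -
  have "{x, Suc x} \<in> snd (fan t)"
    using assms(4) cycle_edge_Suc_mod[of x t] unfolding fan_def by simp
  then have "{f x, f (Suc x)} \<in> snd (gen_wheel d s)"
    using assms(1) by force
  moreover have "f x \<in> Inl ` {..<s} \<union> Inr ` rim_neighbours d v"
    "f (Suc x) \<in> Inl ` {..<s} \<union> Inr ` rim_neighbours d v"
    using fan_copy_neighbour_of_rim_centre[OF assms(1,2)] assms(3,4) by simp_all
  ultimately show ?thesis
    using gen_wheel_edge_hub_hub by auto
qed

lemma fan_copy_centre_off_rim:
  assumes "(s = 2 \<and> 6 \<le> t) \<or> (3 \<le> s \<and> 7 \<le> t)" "inj_on f {..<t}"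
    and edges: "\<forall>e\<in>snd (fan t). f ` e \<in> snd (gen_wheel d s)"
  shows "f 0 \<notin> range Inr"
proof
  assume "f 0 \<in> range Inr"
  then obtain v where v: "f 0 = Inr v"
    by blast
  let ?R = "Inr ` rim_neighbours d v :: (nat + nat) set"
  have finite_R: "finite ?R"
    unfolding rim_neighbours_def by simp
  have card_R: "card ?R \<le> 2"
    using card_rim_neighbours_le by (simp add: card_image)
  show False
  proof (cases "s = 2")
    case True
    have "card {1..5::nat} \<le> card (Inl ` {..<s} \<union> ?R)"
    proof (rule card_inj_on_le)
      show "inj_on f {1..5}"
        using assms(1) by (auto intro: inj_on_subset[OF assms(2)])
      show "f ` {1..5} \<subseteq> Inl ` {..<s} \<union> ?R"
        using assms(1) by (intro image_subsetI fan_copy_neighbour_of_rim_centre[OF edges v]) auto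
    qed (use finite_R in simp)
    also have "\<dots> \<le> card (Inl ` {..<s} :: (nat + nat) set) + card ?R"
      by (rule card_Un_le)
    also have "\<dots> \<le> 4"
      using True card_R by (simp add: card_image)
    finally show False
      by simp
  next
    case False
    then have "7 \<le> t"
      using assms(1) by simp
    note pair = fan_copy_path_edge_meets_rim_neighbours[OF edges v]
    obtain x1 x2 x3 where x123: "x1 \<in> {1, 2}" "x2 \<in> {3, 4}" "x3 \<in> {5, 6}"
      and "f ` {x1, x2, x3} \<subseteq> ?R"
      using pair[of 1] pair[of 3] pair[of 5] \<open>7 \<le> t\<close> by (simp add: numeral_eq_Suc) blast
    moreover have "inj_on f {x1, x2, x3}"
      using x123 \<open>7 \<le> t\<close> by (intro inj_on_subset[OF assms(2)]) auto
    ultimately have "card {x1, x2, x3} \<le> card ?R"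
      using finite_R by (intro card_inj_on_le)
    with x123 card_R show False
      by auto
  qed
qed

lemma gen_wheel_no_rainbow_fan:
  assumes "t \<le> d + 1" "(s = 2 \<and> 6 \<le> t) \<or> (3 \<le> s \<and> 7 \<le> t)"
  shows "\<not> has_rainbow_copy (wheel_colouring d (t - 3)) (gen_wheel d s) (fan t)"
proof
  assume "has_rainbow_copy (wheel_colouring d (t - 3)) (gen_wheel d s) (fan t)"
  then obtain f where f: "inj_on f {..<t}" "\<forall>e\<in>snd (fan t). f ` e \<in> snd (gen_wheel d s)"
      "inj_on (\<lambda>e. wheel_colouring d (t - 3) (f ` e)) (snd (fan t))"
    unfolding has_rainbow_copy_def fan_def by auto
  obtain h where "f 0 = Inl h"
    using fan_copy_centre_off_rim[OF assms(2) f(1,2)] by (cases "f 0") auto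
  have cycle: "\<forall>e\<in>cycle_edges t. f ` e \<in> snd (gen_wheel d s)"
    "inj_on (\<lambda>e. wheel_colouring d (t - 3) (f ` e)) (cycle_edges t)"
    using f(2,3) inj_on_subset unfolding fan_def by auto
  obtain x where "x < t" "x \<noteq> 0" "f x \<notin> range Inr"
    using rainbow_cycle_leaves_rim_twice[OF _ assms(1) f(1) cycle, of 0] assms(2) by auto
  then obtain i where "f x = Inl i"
    by (cases "f x") auto
  moreover have "f ` {0, x} \<in> snd (gen_wheel d s)"
    using f(2) fan_spoke[of x t] \<open>x < t\<close> \<open>x \<noteq> 0\<close> by blast
  ultimately show False
    using \<open>f 0 = Inl h\<close> gen_wheel_edge_hub_hub by simp
qed

lemma floor_le_rim_colours:
  assumes "1 \<le> m" "1 \<le> d"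
  shows "\<lfloor>(real s + 1) * real d - real d / real m\<rfloor> \<le> int (rim_colours d m + s * d)"
proof -
  define q where "q = (d - 1) div m"
  have "q * m < d"
    using div_times_less_eq_dividend[of "d - 1" m] assms(2) unfolding q_def by linarith
  then have "real q * real m < real d"
    by (metis of_nat_less_iff of_nat_mult)
  then have "real q < real d / real m"
    using assms(1) by (simp add: pos_less_divide_eq)
  moreover have "real (rim_colours d m + s * d) = real d - 1 - real q + real s * real d"
    using div_le_dividend[of "d - 1" m] assms(2)
    unfolding rim_colours_def q_def[symmetric] by (simp add: of_nat_diff)
  ultimately have "(real s + 1) * real d - real d / real m < real (rim_colours d m + s * d) + 1"
    by (simp add: algebra_simps)
  then show ?thesis
    by (simp add: floor_le_iff)
qed

lemma rb_gen_wheel_ge: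
  assumes "5 \<le> t" "t \<le> d + 1"
    and "\<not> has_rainbow_copy (wheel_colouring d (t - 3)) (gen_wheel d s) H"
  shows "\<lfloor>((real s + 1) * real t - (3 * real s + 4)) / (real t - 3) * real d\<rfloor> + 1
           \<le> int (rb (gen_wheel d s) H)"
proof -
  define M where "M = real (t - 3)"
  have "real t - 3 = M" "real t = M + 3" "M > 0"
    using assms(1) unfolding M_def by (simp_all add: of_nat_diff)
  then have "((real s + 1) * real t - (3 * real s + 4)) / (real t - 3) * real d
      = (real s + 1) * real d - real d / M"
    by (simp add: field_simps)
  then have "\<lfloor>((real s + 1) * real t - (3 * real s + 4)) / (real t - 3) * real d\<rfloor>
      \<le> int (rim_colours d (t - 3) + s * d)"
    using floor_le_rim_colours[of "t - 3" d s] assms(1,2) unfolding M_def by simp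
  moreover have "rim_colours d (t - 3) + s * d < rb (gen_wheel d s) H"
    using assms(1,2) finite_gen_wheel_edges card_wheel_colouring_ge assms(3)
    by (intro rb_gt_if_no_rainbow_copy) auto
  ultimately show ?thesis
    by linarith
qed

theorem theorem4p2:
  fixes d s t l :: nat
  assumes "s \<ge> 1" and "d \<ge> t - 1" and "t \<ge> 5" and "t \<ge> l + 4"
  shows "(\<forall>\<theta>\<in>Theta t l.
            int (rb (wheel d) \<theta>) \<ge> \<lfloor>(2 * real t - 7) / (real t - 3) * real d\<rfloor> + 1)
       \<and> (((s = 2 \<and> t \<ge> 6) \<or> (s \<ge> 3 \<and> t \<ge> 7)) \<longrightarrow>
            int (rb (gen_wheel d s) (fan t)) \<ge>
              \<lfloor>((real s + 1) * real t - (3 * real s + 4)) / (real t - 3) * real d\<rfloor> + 1)"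
proof (intro conjI ballI impI)
  have t: "5 \<le> t" "t \<le> d + 1"
    using assms(2,3) by auto
  fix \<theta> assume "\<theta> \<in> Theta t l"
  then obtain C where "\<theta> = ({..<t}, cycle_edges t \<union> C)"
    unfolding Theta_def by blast
  then have "\<not> has_rainbow_copy (wheel_colouring d (t - 3)) (gen_wheel d 1) \<theta>"
    using wheel_no_rainbow_cycle_supergraph[OF t] unfolding wheel_def by blast
  from rb_gen_wheel_ge[OF t this]
  show "int (rb (wheel d) \<theta>) \<ge> \<lfloor>(2 * real t - 7) / (real t - 3) * real d\<rfloor> + 1"
    unfolding wheel_def by simp
next
  assume "(s = 2 \<and> t \<ge> 6) \<or> (s \<ge> 3 \<and> t \<ge> 7)"
  then show "int (rb (gen_wheel d s) (fan t)) \<ge>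
      \<lfloor>((real s + 1) * real t - (3 * real s + 4)) / (real t - 3) * real d\<rfloor> + 1"
    using assms(2,3) gen_wheel_no_rainbow_fan by (intro rb_gen_wheel_ge) auto
qed

end
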